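(* Let $X,Y\subseteq\mathbb{R}^n$, let $\xi\in\mathbb{R}\setminus\{0\}$ and let $A$ be an invertible $n\times n$ matrix. The cost $c(x,y)=|x|^2|y|^2+\xi\langle Ax,y\rangle$ satisfies the $2$-twist condition: for every $(x_0,y_0)\in X\times Y$ the set $L(x_0,y_0)=\{y\in Y:D_xc(x_0,y)=D_xc(x_0,y_0)\}$ has at most two elements.
   Context: $|\cdot|$ and $\langle\cdot,\cdot\rangle$ are the Euclidean norm and inner product on $\mathbb{R}^n$; $D_xc$ denotes the gradient of $c$ in the variable $x$. *)

theory Defs
  imports "HOL-Analysis.Analysis"
begin

definition cost :: "real^'n^'n \<Rightarrow> real \<Rightarrow> real^'n \<Rightarrow> real^'n \<Rightarrow> real" where
  "cost A xi x y = (norm x)^2 * (norm y)^2 + xi * ((A *v x) \<bullet> y)"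

definition grad_x :: "('a::euclidean_space \<Rightarrow> 'b \<Rightarrow> real) \<Rightarrow> 'a \<Rightarrow> 'b \<Rightarrow> 'a" where
  "grad_x c x y = (SOME g. ((\<lambda>x'. c x' y) has_derivative (\<lambda>h. g \<bullet> h)) (at x))"

definition twist_set :: "('a::euclidean_space \<Rightarrow> 'b \<Rightarrow> real) \<Rightarrow> 'b set \<Rightarrow> 'a \<Rightarrow> 'b \<Rightarrow> 'b set" where
  "twist_set c Y x0 y0 = {y \<in> Y. grad_x c x0 y = grad_x c x0 y0}"

end

theory Submission
  imports Defs "HOL-Computational_Algebra.Polynomial"
begin

text \<open>The gradient is D_x c(x0,y) = 2|y|^2 x0 + xi A^T y. Solving D_x c(x0,y) = D_x c(x0,y0) for y
  with A invertible gives y = p + |y|^2 q, with p and q depending only on x0 and y0. Hence every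
  y in L(x0,y0) is determined by t = |y|^2, and taking squared norms shows that t is a root of the
  quadratic |q|^2 t^2 + (2 p.q - 1) t + |p|^2; so there are at most two such t unless q = 0, in
  which case L(x0,y0) is contained in {p}.\<close>

lemma grad_x_eqI:
  fixes c :: "'a::euclidean_space \<Rightarrow> 'b \<Rightarrow> real"
  assumes "((\<lambda>x'. c x' y) has_derivative (\<lambda>h. g \<bullet> h)) (at x)"
  shows "grad_x c x y = g"
  unfolding grad_x_def
proof (rule some_equality)
  fix g'
  assume "((\<lambda>x'. c x' y) has_derivative (\<lambda>h. g' \<bullet> h)) (at x)"
  then have "(\<lambda>h. g' \<bullet> h) = (\<lambda>h. g \<bullet> h)"
    using assms by (rule has_derivative_unique)
  then have "(g' - g) \<bullet> (g' - g) = 0"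
    by (metis inner_diff_left right_minus_eq)
  then show "g' = g" by simp
qed (fact assms)

lemma cost_has_derivative:
  fixes A :: "real^'n^'n"
  shows "((\<lambda>x'. cost A xi x' y) has_derivative
           (\<lambda>h. ((2 * (norm y)\<^sup>2) *\<^sub>R x + xi *\<^sub>R (y v* A)) \<bullet> h)) (at x)"
proof -
  have cost_eq: "(\<lambda>x'. cost A xi x' y) = (\<lambda>x'. (x' \<bullet> x') * (norm y)\<^sup>2 + xi * (y \<bullet> (A *v x')))"
    by (auto simp: cost_def power2_norm_eq_inner inner_commute)
  have "((*v) A has_derivative (*v) A) (at x)"
    by (rule bounded_linear_imp_has_derivative[OF matrix_vector_mul_bounded_linear])
  then have "((\<lambda>x'. (x' \<bullet> x') * (norm y)\<^sup>2 + xi * (y \<bullet> (A *v x'))) has_derivative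
      (\<lambda>h. (x \<bullet> h + h \<bullet> x) * (norm y)\<^sup>2 + xi * (y \<bullet> (A *v h)))) (at x)"
    by (intro derivative_eq_intros) auto
  moreover have "(\<lambda>h. (x \<bullet> h + h \<bullet> x) * (norm y)\<^sup>2 + xi * (y \<bullet> (A *v h))) =
      (\<lambda>h. ((2 * (norm y)\<^sup>2) *\<^sub>R x + xi *\<^sub>R (y v* A)) \<bullet> h)"
    by (auto simp: dot_lmul_matrix[of y A, symmetric] inner_add_left inner_commute algebra_simps)
  ultimately show ?thesis
    by (simp only: cost_eq)
qed

lemma grad_x_cost:
  fixes A :: "real^'n^'n"
  shows "grad_x (cost A xi) x y = (2 * (norm y)\<^sup>2) *\<^sub>R x + xi *\<^sub>R (y v* A)"
  by (rule grad_x_eqI[OF cost_has_derivative])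

lemma finite_card_quadratic_roots:
  fixes a b c :: "'a::idom"
  assumes "a \<noteq> 0"
  shows "finite {t. a * t\<^sup>2 + b * t + c = 0} \<and> card {t. a * t\<^sup>2 + b * t + c = 0} \<le> 2"
proof -
  have "{t. a * t\<^sup>2 + b * t + c = 0} = {t. poly [:c, b, a:] t = 0}"
    by (auto simp: algebra_simps power2_eq_square)
  moreover have "[:c, b, a:] \<noteq> 0" and "degree [:c, b, a:] = 2"
    using assms by auto
  ultimately show ?thesis
    using poly_roots_finite[of "[:c, b, a:]"] card_poly_roots_bound[of "[:c, b, a:]"] by simp
qed

lemma finite_card_le_2_if_norm_parametrised:
  fixes p q :: "'a::real_inner"
  assumes param: "\<And>y. y \<in> S \<Longrightarrow> y = p + (norm y)\<^sup>2 *\<^sub>R q"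
  shows "finite S \<and> card S \<le> 2"
proof (cases "q = 0")
  case True
  then have sub: "S \<subseteq> {p}"
    using param by force
  then have "card S \<le> card {p}"
    by (rule card_mono[rotated]) simp
  with sub show ?thesis
    using finite_subset by fastforce
next
  case False
  define T where "T = {t. (q \<bullet> q) * t\<^sup>2 + (2 * (p \<bullet> q) - 1) * t + p \<bullet> p = 0}"
  have "(norm y)\<^sup>2 \<in> T" if "y \<in> S" for y
  proof -
    have "(norm y)\<^sup>2 = (p + (norm y)\<^sup>2 *\<^sub>R q) \<bullet> (p + (norm y)\<^sup>2 *\<^sub>R q)"
      using param[OF that] by (metis power2_norm_eq_inner)
    also have "\<dots> = p \<bullet> p + 2 * (norm y)\<^sup>2 * (p \<bullet> q) + ((norm y)\<^sup>2)\<^sup>2 * (q \<bullet> q)"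
      by (simp add: inner_add_left inner_add_right inner_commute power2_eq_square algebra_simps)
    finally show ?thesis
      unfolding T_def by (simp add: algebra_simps)
  qed
  then have sub: "S \<subseteq> (\<lambda>t. p + t *\<^sub>R q) ` T"
    using param by blast
  have T: "finite T" "card T \<le> 2"
    unfolding T_def using finite_card_quadratic_roots[of "q \<bullet> q"] False by simp_all
  have "card S \<le> card ((\<lambda>t. p + t *\<^sub>R q) ` T)"
    using sub T(1) by (intro card_mono) simp_all
  also have "\<dots> \<le> card T"
    using T(1) by (rule card_image_le)
  finally have "card S \<le> 2"
    using T(2) by linarith
  moreover have "finite S"
    using sub T(1) finite_subset by blast
  ultimately show ?thesis
    by blast
qed

lemma twist_set_cost_norm_parametrised:
  fixes A :: "real^'n^'n"
  assumes "xi \<noteq> 0" and "invertible A"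
  obtains p q where "\<And>y. y \<in> twist_set (cost A xi) Y x0 y0 \<Longrightarrow> y = p + (norm y)\<^sup>2 *\<^sub>R q"
proof -
  obtain B where B: "A ** B = mat 1"
    using assms(2) unfolding invertible_def by blast
  define v where "v = grad_x (cost A xi) x0 y0"
  have "y = (1 / xi) *\<^sub>R (v v* B) + (norm y)\<^sup>2 *\<^sub>R ((- 2 / xi) *\<^sub>R (x0 v* B))"
    if "y \<in> twist_set (cost A xi) Y x0 y0" for y
  proof -
    have "(2 * (norm y)\<^sup>2) *\<^sub>R x0 + xi *\<^sub>R (y v* A) = v"
      using that unfolding twist_set_def v_def by (simp add: grad_x_cost)
    then have "xi *\<^sub>R (y v* A) = v - (2 * (norm y)\<^sup>2) *\<^sub>R x0"
      by (simp add: algebra_simps)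
    then have "(xi *\<^sub>R (y v* A)) v* B = (v - (2 * (norm y)\<^sup>2) *\<^sub>R x0) v* B"
      by simp
    then have solved: "xi *\<^sub>R y = v v* B - (2 * (norm y)\<^sup>2) *\<^sub>R (x0 v* B)"
      by (simp only: vector_matrix_mul_assoc B scaleR_vector_matrix_assoc
          vector_matrix_mult_diff_distrib vector_matrix_mul_rid)
    have "y = (1 / xi) *\<^sub>R (xi *\<^sub>R y)"
      using assms(1) by simp
    also have "\<dots> = (1 / xi) *\<^sub>R (v v* B) + (norm y)\<^sup>2 *\<^sub>R ((- 2 / xi) *\<^sub>R (x0 v* B))"
      unfolding solved by (simp add: scaleR_diff_right)
    finally show ?thesis .
  qed
  then show thesis
    by (rule that)
qed

theorem mainTheorem15:
  fixes X Y :: "(real^'n) set" and xi :: real and A :: "real^'n^'n"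
  assumes "xi \<noteq> 0" and "invertible A"
  shows "\<forall>x0\<in>X. \<forall>y0\<in>Y. finite (twist_set (cost A xi) Y x0 y0)
                          \<and> card (twist_set (cost A xi) Y x0 y0) \<le> 2"
proof (intro ballI)
  fix x0 y0
  obtain p q where "\<And>y. y \<in> twist_set (cost A xi) Y x0 y0 \<Longrightarrow> y = p + (norm y)\<^sup>2 *\<^sub>R q"
    using twist_set_cost_norm_parametrised[OF assms] by blast
  then show "finite (twist_set (cost A xi) Y x0 y0) \<and> card (twist_set (cost A xi) Y x0 y0) \<le> 2"
    by (rule finite_card_le_2_if_norm_parametrised)
qed

end
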